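(* Let $H$ be a Hilbert space and $T$ a densely defined closed operator on $H$ with closed range. The following are equivalent: (1) $T$ is selfadjoint; (2) $T=\overline{w(T^{*})T}\,T^{*}$; (3) $T^{*}=TT^{*}w(T)$.
   Context: For a densely defined closed operator $A$ with closed range, $A^{*}$ is its adjoint, $C(A)=D(A)\cap N(A)^{\perp}$, and the Moore–Penrose inverse $A^{\dagger}$ is defined on $R(A)\oplus^{\perp}R(A)^{\perp}$ by $A^{\dagger}y=(A|_{C(A)})^{-1}y$ for $y\in R(A)$ and $A^{\dagger}y=0$ for $y\in R(A)^{\perp}$. The generalized Cauchy dual is $w(A)=A(A^{*}A)^{\dagger}$; products of operators are on natural domains, and $\overline{B}$ is the closure of a closable operator $B$. *)

theory Defs
  imports "HOL-Analysis.Analysis"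
begin

text \<open>HOL-Analysis only provides real inner product spaces, so we introduce
complex vector spaces and complex Hilbert spaces as type classes.  The inner
product is conjugate-linear in the first and linear in the second argument.\<close>

class complex_vector = real_vector +
  fixes scaleC :: "complex \<Rightarrow> 'a \<Rightarrow> 'a"
  assumes scaleC_add_right: "scaleC a (x + y) = scaleC a x + scaleC a y"
    and scaleC_add_left: "scaleC (a + b) x = scaleC a x + scaleC b x"
    and scaleC_scaleC: "scaleC a (scaleC b x) = scaleC (a * b) x"
    and scaleC_one: "scaleC 1 x = x"
    and scaleR_scaleC: "scaleR r x = scaleC (complex_of_real r) x"

class complex_hilbert_space = complex_vector + banach +
  fixes cinner :: "'a \<Rightarrow> 'a \<Rightarrow> complex"
  assumes cinner_commute: "cinner x y = cnj (cinner y x)"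
    and cinner_add_right: "cinner x (y + z) = cinner x y + cinner x z"
    and cinner_scaleC_right: "cinner x (scaleC a y) = a * cinner x y"
    and norm_eq_sqrt_cinner: "norm x = sqrt (Re (cinner x x))"

type_synonym 'a lop = "('a \<times> 'a) set"

definition is_operator :: "('a::complex_vector) lop \<Rightarrow> bool" where
  "is_operator G \<longleftrightarrow> (0, 0) \<in> G
     \<and> (\<forall>x y u v. (x, y) \<in> G \<longrightarrow> (u, v) \<in> G \<longrightarrow> (x + u, y + v) \<in> G)
     \<and> (\<forall>c x y. (x, y) \<in> G \<longrightarrow> (scaleC c x, scaleC c y) \<in> G)
     \<and> (\<forall>y. (0, y) \<in> G \<longrightarrow> y = 0)"

definition densely_defined :: "('a::complex_hilbert_space) lop \<Rightarrow> bool" where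
  "densely_defined G \<longleftrightarrow> closure (Domain G) = UNIV"

definition closed_operator :: "('a::complex_hilbert_space) lop \<Rightarrow> bool" where
  "closed_operator G \<longleftrightarrow> is_operator G \<and> closed G"

definition closable :: "('a::complex_hilbert_space) lop \<Rightarrow> bool" where
  "closable G \<longleftrightarrow> is_operator G \<and> is_operator (closure G)"

definition op_closure :: "('a::complex_hilbert_space) lop \<Rightarrow> 'a lop" where
  "op_closure G = closure G"

definition kernel :: "('a::complex_vector) lop \<Rightarrow> 'a set" where
  "kernel G = {x. (x, 0) \<in> G}"

definition orth :: "('a::complex_hilbert_space) set \<Rightarrow> 'a set" where
  "orth S = {z. \<forall>s\<in>S. cinner s z = 0}"

definition op_adjoint :: "('a::complex_hilbert_space) lop \<Rightarrow> 'a lop" where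
  "op_adjoint G = {(y, z). \<forall>x w. (x, w) \<in> G \<longrightarrow> cinner w y = cinner x z}"

definition op_comp :: "'a lop \<Rightarrow> 'a lop \<Rightarrow> 'a lop" where
  "op_comp A B = {(x, z). \<exists>y. (x, y) \<in> B \<and> (y, z) \<in> A}"

definition carrier_op :: "('a::complex_hilbert_space) lop \<Rightarrow> 'a set" where
  "carrier_op A = Domain A \<inter> orth (kernel A)"

text \<open>Moore-Penrose inverse, defined on R(A) \<oplus> R(A)^\<perp>:
  A^\<dagger>(y + z) = (A|C(A))^{-1} y for y in R(A), z in R(A)^\<perp>.\<close>
definition mp_inverse :: "('a::complex_hilbert_space) lop \<Rightarrow> 'a lop" where
  "mp_inverse A = {(y + z, x) | x y z. x \<in> carrier_op A \<and> (x, y) \<in> A \<and> z \<in> orth (Range A)}"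

text \<open>Generalized Cauchy dual w(A) = A (A*A)^\<dagger>.\<close>
definition cauchy_dual :: "('a::complex_hilbert_space) lop \<Rightarrow> 'a lop" where
  "cauchy_dual A = op_comp A (mp_inverse (op_comp (op_adjoint A) A))"

definition selfadjoint :: "('a::complex_hilbert_space) lop \<Rightarrow> bool" where
  "selfadjoint A \<longleftrightarrow> op_adjoint A = A"

end

theory Submission
  imports Defs
begin

text \<open>For a closed densely defined \<open>T\<close> with closed range, the closed range theorem gives
  \<open>R(T\<^sup>*) = N(T)\<^sup>\<perp>\<close> and \<open>R(T) = N(T\<^sup>*)\<^sup>\<perp>\<close>, so the Moore-Penrose inverses of
  \<open>T\<^sup>*T\<close> and \<open>TT\<^sup>*\<close> invert these operators on their closed ranges. Hence
  \<open>T\<^sup>* w(T) = T\<^sup>*T (T\<^sup>*T)\<^sup>\<dagger>\<close> is the orthogonal projection \<open>P\<close> onto \<open>N(T)\<^sup>\<perp>\<close>,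
  so that \<open>T T\<^sup>* w(T) = T P = T\<close>; and \<open>w(T\<^sup>*) T = T\<^sup>* (TT\<^sup>*)\<^sup>\<dagger> T\<close> is the restriction
  of \<open>P\<close> to the dense domain of \<open>T\<close>, whose closure is \<open>P\<close>, so that
  \<open>cl(w(T\<^sup>*)T) T\<^sup>* = P T\<^sup>* = T\<^sup>*\<close>. Both conditions therefore say exactly \<open>T\<^sup>* = T\<close>.\<close>

section \<open>Inner products\<close>

lemma scaleC_zero [simp]: "scaleC c (0::'a::complex_vector) = 0"
  using scaleC_add_right[of c 0 0] by simp

lemma scaleC_diff_right: "scaleC c (a - b) = scaleC c a - scaleC c (b::'a::complex_vector)"
  by (metis scaleC_add_right diff_add_cancel eq_diff_eq)

lemma cinner_add_left: "cinner (x + y) z = cinner x z + cinner y (z::'a::complex_hilbert_space)"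
  by (metis cinner_commute cinner_add_right complex_cnj_add)

lemma cinner_scaleC_left: "cinner (scaleC a x) (y::'a::complex_hilbert_space) = cnj a * cinner x y"
  by (metis cinner_commute cinner_scaleC_right complex_cnj_mult complex_cnj_cnj)

lemma cinner_zero_right [simp]: "cinner (x::'a::complex_hilbert_space) 0 = 0"
  using cinner_add_right[of x 0 0] by simp

lemma cinner_zero_left [simp]: "cinner 0 (x::'a::complex_hilbert_space) = 0"
  by (metis cinner_commute cinner_zero_right complex_cnj_zero)

lemma cinner_eq_zero_sym: "cinner x y = 0 \<longleftrightarrow> cinner y (x::'a::complex_hilbert_space) = 0"
  by (metis cinner_commute complex_cnj_zero)

lemma cinner_minus_right: "cinner (x::'a::complex_hilbert_space) (- y) = - cinner x y"
  using cinner_add_right[of x y "-y"] by (simp add: add_eq_0_iff)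

lemma cinner_minus_left: "cinner (- x) (y::'a::complex_hilbert_space) = - cinner x y"
  using cinner_add_left[of x "-x" y] by (simp add: add_eq_0_iff)

lemma cinner_diff_right: "cinner (x::'a::complex_hilbert_space) (y - z) = cinner x y - cinner x z"
  using cinner_add_right[of x y "-z"] by (simp add: cinner_minus_right)

lemma cinner_diff_left: "cinner (x - y) (z::'a::complex_hilbert_space) = cinner x z - cinner y z"
  using cinner_add_left[of x "-y" z] by (simp add: cinner_minus_left)

lemma cinner_scaleR_right: "cinner (x::'a::complex_hilbert_space) (scaleR r y) = of_real r * cinner x y"
  by (simp add: scaleR_scaleC cinner_scaleC_right)

lemma cinner_scaleR_left: "cinner (scaleR r x) (y::'a::complex_hilbert_space) = of_real r * cinner x y"
  by (simp add: scaleR_scaleC cinner_scaleC_left)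

lemma power2_norm_eq_cinner: "(norm (x::'a::complex_hilbert_space))\<^sup>2 = Re (cinner x x)"
proof -
  have "0 \<le> sqrt (Re (cinner x x))"
    by (metis norm_eq_sqrt_cinner norm_ge_zero)
  then show ?thesis
    by (simp add: norm_eq_sqrt_cinner[of x])
qed

lemma cinner_self: "cinner (x::'a::complex_hilbert_space) x = complex_of_real ((norm x)\<^sup>2)"
proof -
  have "Im (cinner x x) = 0"
    using cinner_commute[of x x] by (metis Reals_cnj_iff complex_is_Real_iff)
  then show ?thesis
    by (simp add: complex_eq_iff power2_norm_eq_cinner)
qed

lemma cinner_self_eq_zero [simp]: "cinner (x::'a::complex_hilbert_space) x = 0 \<longleftrightarrow> x = 0"
  by (simp add: cinner_self)

lemma norm_scaleC: "norm (scaleC c (x::'a::complex_hilbert_space)) = cmod c * norm x"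
proof -
  have "cinner (scaleC c x) (scaleC c x) = (cnj c * c) * cinner x x"
    by (simp add: cinner_scaleC_left cinner_scaleC_right mult.assoc)
  also have "cnj c * c = complex_of_real ((cmod c)\<^sup>2)"
    by (metis complex_norm_square mult.commute of_real_power)
  also have "complex_of_real ((cmod c)\<^sup>2) * cinner x x = complex_of_real ((cmod c * norm x)\<^sup>2)"
    by (simp add: cinner_self power_mult_distrib)
  finally have "(norm (scaleC c x))\<^sup>2 = (cmod c * norm x)\<^sup>2"
    by (simp add: power2_norm_eq_cinner)
  then show ?thesis
    by (rule power2_eq_imp_eq) auto
qed

lemma norm_add_Pythagorean_cinner:
  assumes "cinner u v = 0"
  shows "(norm (u + v))\<^sup>2 = (norm u)\<^sup>2 + (norm (v::'a::complex_hilbert_space))\<^sup>2"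
proof -
  have "cinner v u = 0"
    using assms by (simp add: cinner_eq_zero_sym)
  then show ?thesis
    using assms by (simp add: power2_norm_eq_cinner cinner_add_left cinner_add_right)
qed

lemma parallelogram_law:
  "(norm (a + b))\<^sup>2 + (norm (a - b))\<^sup>2 = 2 * (norm a)\<^sup>2 + 2 * (norm (b::'a::complex_hilbert_space))\<^sup>2"
  by (simp add: power2_norm_eq_cinner cinner_add_left cinner_add_right cinner_diff_left cinner_diff_right)

lemma cmod_cinner_le: "cmod (cinner x y) \<le> norm x * norm (y::'a::complex_hilbert_space)"
proof (cases "x = 0")
  case False
  define t where "t = cinner x y / cinner x x"
  define r where "r = y - scaleC t x"
  have "cinner x r = 0"
    using False by (simp add: r_def t_def cinner_diff_right cinner_scaleC_right)
  then have "cinner r (scaleC t x) = 0"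
    by (simp add: cinner_scaleC_right cinner_eq_zero_sym)
  then have "(norm y)\<^sup>2 = (norm r)\<^sup>2 + (cmod t * norm x)\<^sup>2"
    using norm_add_Pythagorean_cinner[of r "scaleC t x"] by (simp add: r_def norm_scaleC)
  then have "(cmod t * norm x)\<^sup>2 \<le> (norm y)\<^sup>2"
    by simp
  then have "cmod t * norm x \<le> norm y"
    by (rule power2_le_imp_le) simp
  then have "norm x * (cmod t * norm x) \<le> norm x * norm y"
    by (rule mult_left_mono) simp
  moreover have "cmod t = cmod (cinner x y) / (norm x)\<^sup>2"
    by (simp add: t_def cinner_self norm_divide norm_power)
  then have "cmod (cinner x y) = cmod t * norm x * norm x"
    using False by (simp add: power2_eq_square)
  ultimately show ?thesis
    by (simp add: mult_ac)
qed simp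

lemma bounded_bilinear_cinner: "bounded_bilinear (cinner :: 'a::complex_hilbert_space \<Rightarrow> 'a \<Rightarrow> complex)"
proof
  fix a a' b b' :: 'a and r :: real
  show "cinner (a + a') b = cinner a b + cinner a' b" by (rule cinner_add_left)
  show "cinner a (b + b') = cinner a b + cinner a b'" by (rule cinner_add_right)
  show "cinner (r *\<^sub>R a) b = r *\<^sub>R cinner a b" by (simp add: cinner_scaleR_left scaleR_conv_of_real)
  show "cinner a (r *\<^sub>R b) = r *\<^sub>R cinner a b" by (simp add: cinner_scaleR_right scaleR_conv_of_real)
  show "\<exists>K. \<forall>a b::'a. norm (cinner a b) \<le> norm a * norm b * K"
    by (rule exI[of _ 1]) (simp add: cmod_cinner_le)
qed

lemma continuous_on_cinner [continuous_intros]: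
  fixes f g :: "'b::topological_space \<Rightarrow> 'a::complex_hilbert_space"
  shows "continuous_on S f \<Longrightarrow> continuous_on S g \<Longrightarrow> continuous_on S (\<lambda>x. cinner (f x) (g x))"
  by (rule bounded_bilinear.continuous_on[OF bounded_bilinear_cinner])

section \<open>Closed subspaces and orthogonal decomposition\<close>

definition csubspace :: "'a::complex_vector set \<Rightarrow> bool" where
  "csubspace M \<longleftrightarrow> 0 \<in> M \<and> (\<forall>x\<in>M. \<forall>y\<in>M. x + y \<in> M) \<and> (\<forall>c. \<forall>x\<in>M. scaleC c x \<in> M)"

lemma csubspace_0: "csubspace M \<Longrightarrow> 0 \<in> M"
  by (simp add: csubspace_def)

lemma csubspace_add: "csubspace M \<Longrightarrow> x \<in> M \<Longrightarrow> y \<in> M \<Longrightarrow> x + y \<in> M"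
  by (simp add: csubspace_def)

lemma csubspace_scaleC: "csubspace M \<Longrightarrow> x \<in> M \<Longrightarrow> scaleC c x \<in> M"
  by (simp add: csubspace_def)

lemma csubspace_scaleR: "csubspace M \<Longrightarrow> x \<in> M \<Longrightarrow> scaleR r x \<in> M"
  by (simp add: csubspace_def scaleR_scaleC)

lemma csubspace_uminus: "csubspace M \<Longrightarrow> x \<in> M \<Longrightarrow> - x \<in> M"
  using csubspace_scaleR[of M x "-1"] by simp

lemma csubspace_diff: "csubspace M \<Longrightarrow> x \<in> M \<Longrightarrow> y \<in> M \<Longrightarrow> x - y \<in> M"
  using csubspace_add[of M x "-y"] csubspace_uminus[of M y] by simp

lemma csubspace_orth: "csubspace (orth S)"
  by (auto simp: csubspace_def orth_def cinner_add_right cinner_scaleC_right)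

lemma closed_orth: "closed (orth S)"
proof -
  have "orth S = (\<Inter>s\<in>S. {z. cinner s z = 0})"
    by (auto simp: orth_def)
  moreover have "closed {z. cinner s z = 0}" for s :: 'a
    by (intro closed_Collect_eq continuous_intros)
  ultimately show ?thesis
    by (metis (no_types, lifting) closed_INT)
qed

lemma mem_orth_self: "x \<in> S \<Longrightarrow> x \<in> orth S \<Longrightarrow> x = 0"
  by (auto simp: orth_def)

lemma orth_dense: "closure S = UNIV \<Longrightarrow> orth S = {0}"
proof -
  assume dense: "closure S = UNIV"
  have "z = 0" if z: "z \<in> orth S" for z
  proof -
    have "S \<subseteq> {s. cinner s z = 0}"
      using z by (auto simp: orth_def)
    moreover have "closed {s. cinner s z = 0}"
      by (intro closed_Collect_eq continuous_intros)
    ultimately have "closure S \<subseteq> {s. cinner s z = 0}"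
      by (rule closure_minimal)
    then have "cinner z z = 0"
      using dense by blast
    then show "z = 0"
      by simp
  qed
  then show ?thesis
    by (auto simp: orth_def)
qed

lemma norm_diff_midpoint:
  fixes a b x :: "'a::complex_hilbert_space"
  shows "(norm (a - b))\<^sup>2
    = 2 * (norm (x - a))\<^sup>2 + 2 * (norm (x - b))\<^sup>2 - 4 * (norm (x - scaleR (1/2) (a + b)))\<^sup>2"
proof -
  have "(x - a) + (x - b) = scaleR 2 (x - scaleR (1/2) (a + b))"
    by (simp add: algebra_simps scaleR_2)
  then have "(norm ((x - a) + (x - b)))\<^sup>2 = 4 * (norm (x - scaleR (1/2) (a + b)))\<^sup>2"
    by (simp add: power_mult_distrib)
  moreover have "norm ((x - a) - (x - b)) = norm (a - b)"
    by (simp add: norm_minus_commute)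
  ultimately show ?thesis
    using parallelogram_law[of "x - a" "x - b"] by simp
qed

lemma minimizing_sequence_Cauchy:
  fixes m :: "nat \<Rightarrow> 'a::complex_hilbert_space"
  assumes M: "csubspace M" and mM: "\<And>n. m n \<in> M"
    and low: "\<And>y. y \<in> M \<Longrightarrow> d \<le> (norm (x - y))\<^sup>2"
    and near: "\<And>n. (norm (x - m n))\<^sup>2 < d + inverse (real (Suc n))"
  shows "Cauchy m"
proof (rule metric_CauchyI)
  have bound: "(norm (m i - m j))\<^sup>2 \<le> 2 * inverse (real (Suc i)) + 2 * inverse (real (Suc j))" for i j
  proof -
    have "scaleR (1/2) (m i + m j) \<in> M"
      by (intro csubspace_scaleR csubspace_add M mM)
    then have "d \<le> (norm (x - scaleR (1/2) (m i + m j)))\<^sup>2"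
      by (rule low)
    then show ?thesis
      using near[of i] near[of j] norm_diff_midpoint[of "m i" "m j" x] by linarith
  qed
  fix e :: real assume e: "0 < e"
  obtain N where N: "inverse (real (Suc N)) < e\<^sup>2 / 4"
    using reals_Archimedean[of "e\<^sup>2 / 4"] e by auto
  have "dist (m i) (m j) < e" if "N \<le> i" "N \<le> j" for i j
  proof -
    have "inverse (real (Suc i)) \<le> inverse (real (Suc N))" "inverse (real (Suc j)) \<le> inverse (real (Suc N))"
      using that by (auto intro!: le_imp_inverse_le)
    moreover have "(dist (m i) (m j))\<^sup>2 \<le> 2 * inverse (real (Suc i)) + 2 * inverse (real (Suc j))"
      using bound[of i j] by (simp only: dist_norm)
    ultimately have "(dist (m i) (m j))\<^sup>2 < e\<^sup>2"
      using N by linarith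
    then show ?thesis
      using e by (metis power2_less_imp_less less_imp_le)
  qed
  then show "\<exists>N. \<forall>i\<ge>N. \<forall>j\<ge>N. dist (m i) (m j) < e"
    by blast
qed

lemma closest_point_exists:
  fixes x :: "'a::complex_hilbert_space"
  assumes M: "csubspace M" "closed M"
  shows "\<exists>m\<in>M. \<forall>y\<in>M. norm (x - m) \<le> norm (x - y)"
proof -
  define d where "d = (INF y\<in>M. (norm (x - y))\<^sup>2)"
  have bdd: "bdd_below ((\<lambda>y. (norm (x - y))\<^sup>2) ` M)"
    by (intro bdd_belowI2[where m = 0]) simp
  have low: "d \<le> (norm (x - y))\<^sup>2" if "y \<in> M" for y
    unfolding d_def using bdd that by (rule cINF_lower)
  have ne: "M \<noteq> {}"
    using csubspace_0[OF M(1)] by blast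
  have "\<exists>y\<in>M. (norm (x - y))\<^sup>2 < d + inverse (real (Suc n))" for n
  proof -
    have "d < d + inverse (real (Suc n))"
      by simp
    then show ?thesis
      unfolding d_def by (subst (asm) cINF_less_iff[OF ne bdd])
  qed
  then obtain m where mM: "\<And>n. m n \<in> M" and near: "\<And>n. (norm (x - m n))\<^sup>2 < d + inverse (real (Suc n))"
    by metis
  have "Cauchy m"
    using minimizing_sequence_Cauchy[OF M(1) mM low near] .
  then obtain m0 where lim: "m \<longlonglongrightarrow> m0"
    using Cauchy_convergent_iff convergent_def by blast
  have m0M: "m0 \<in> M"
    using closed_sequentially[OF M(2) mM lim] .
  have dist_m0: "(norm (x - m0))\<^sup>2 \<le> d"
  proof (rule LIMSEQ_le)
    show "(\<lambda>n. (norm (x - m n))\<^sup>2) \<longlonglongrightarrow> (norm (x - m0))\<^sup>2"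
      by (intro tendsto_intros lim)
    show "(\<lambda>n. d + inverse (real (Suc n))) \<longlonglongrightarrow> d"
      using tendsto_add[OF tendsto_const LIMSEQ_inverse_real_of_nat, of d] by simp
    show "\<exists>N. \<forall>n\<ge>N. (norm (x - m n))\<^sup>2 \<le> d + inverse (real (Suc n))"
      using near by (intro exI[of _ 0] allI impI less_imp_le)
  qed
  have "norm (x - m0) \<le> norm (x - y)" if "y \<in> M" for y
  proof (rule power2_le_imp_le)
    show "(norm (x - m0))\<^sup>2 \<le> (norm (x - y))\<^sup>2"
      using dist_m0 low[OF that] by linarith
  qed simp
  with m0M show ?thesis
    by blast
qed

lemma closest_point_orth:
  fixes x :: "'a::complex_hilbert_space"
  assumes M: "csubspace M" and m: "m \<in> M" and closest: "\<And>y. y \<in> M \<Longrightarrow> norm (x - m) \<le> norm (x - y)"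
  shows "x - m \<in> orth M"
  unfolding orth_def
proof (intro CollectI ballI)
  fix u assume u: "u \<in> M"
  show "cinner u (x - m) = 0"
  proof (cases "u = 0")
    case False
    define t where "t = cinner u (x - m) / cinner u u"
    define v where "v = x - m - scaleC t u"
    have "cinner u v = 0"
      using False by (simp add: v_def t_def cinner_diff_right cinner_scaleC_right)
    then have "cinner v (scaleC t u) = 0"
      by (simp add: cinner_scaleC_right cinner_eq_zero_sym)
    then have "(norm (x - m))\<^sup>2 = (norm v)\<^sup>2 + (norm (scaleC t u))\<^sup>2"
      using norm_add_Pythagorean_cinner[of v "scaleC t u"] by (simp add: v_def)
    moreover have "m + scaleC t u \<in> M"
      using M m u by (simp add: csubspace_add csubspace_scaleC)
    then have "norm (x - m) \<le> norm v"
      using closest unfolding v_def by (metis diff_diff_eq)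
    then have "(norm (x - m))\<^sup>2 \<le> (norm v)\<^sup>2"
      by (simp add: power_mono)
    ultimately have "norm (scaleC t u) = 0"
      by simp
    then have "t = 0"
      using False by (simp add: norm_scaleC)
    then show ?thesis
      using False by (simp add: t_def)
  qed simp
qed

lemma orth_decomposition:
  fixes x :: "'a::complex_hilbert_space"
  assumes "csubspace M" "closed M"
  obtains m where "m \<in> M" "x - m \<in> orth M"
  using closest_point_exists[OF assms, of x] closest_point_orth[OF assms(1)] by blast

lemma orth_orth:
  fixes N :: "'a::complex_hilbert_space set"
  assumes "csubspace N" "closed N"
  shows "orth (orth N) = N"
proof
  show "N \<subseteq> orth (orth N)"
    by (auto simp: orth_def cinner_eq_zero_sym)
  show "orth (orth N) \<subseteq> N"
  proof
    fix z assume z: "z \<in> orth (orth N)"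
    obtain n where n: "n \<in> N" "z - n \<in> orth N"
      using orth_decomposition[OF assms] .
    have "cinner (z - n) z = 0" "cinner (z - n) n = 0"
      using z n by (auto simp: orth_def cinner_eq_zero_sym)
    then have "cinner (z - n) (z - n) = 0"
      by (simp add: cinner_diff_right)
    then show "z \<in> N"
      using n by simp
  qed
qed

section \<open>Operators and their adjoints\<close>

instantiation prod :: (complex_vector, complex_vector) complex_vector
begin
definition scaleC_prod_def: "scaleC c x = (scaleC c (fst x), scaleC c (snd x))"
instance
  by standard (auto simp: scaleC_prod_def scaleC_add_right scaleC_add_left scaleC_scaleC scaleC_one
      scaleR_prod_def scaleR_scaleC)
end

instantiation prod :: (complex_hilbert_space, complex_hilbert_space) complex_hilbert_space
begin
definition cinner_prod_def: "cinner x y = cinner (fst x) (fst y) + cinner (snd x) (snd y)"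
instance
proof
  fix x y z :: "'a \<times> 'b" and a :: complex
  show "cinner x y = cnj (cinner y x)"
    by (simp add: cinner_prod_def) (metis cinner_commute)
  show "cinner x (y + z) = cinner x y + cinner x z"
    by (simp add: cinner_prod_def cinner_add_right)
  show "cinner x (scaleC a y) = a * cinner x y"
    by (simp add: cinner_prod_def scaleC_prod_def cinner_scaleC_right distrib_left)
  show "norm x = sqrt (Re (cinner x x))"
    by (cases x) (simp add: cinner_prod_def norm_Pair power2_norm_eq_cinner)
qed
end

lemma cinner_Pair [simp]: "cinner (a, b) (c, d) = cinner a c + cinner b d"
  by (simp add: cinner_prod_def)

lemma is_operator_zero: "is_operator G \<Longrightarrow> (0, 0) \<in> G"
  by (simp add: is_operator_def)

lemma is_operator_add: "is_operator G \<Longrightarrow> (x, y) \<in> G \<Longrightarrow> (u, v) \<in> G \<Longrightarrow> (x + u, y + v) \<in> G"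
  by (simp add: is_operator_def)

lemma is_operator_scaleC: "is_operator G \<Longrightarrow> (x, y) \<in> G \<Longrightarrow> (scaleC c x, scaleC c y) \<in> G"
  by (simp add: is_operator_def)

lemma is_operator_scaleR: "is_operator G \<Longrightarrow> (x, y) \<in> G \<Longrightarrow> (scaleR r x, scaleR r y) \<in> G"
  by (simp add: scaleR_scaleC is_operator_scaleC)

lemma is_operator_diff: "is_operator G \<Longrightarrow> (x, y) \<in> G \<Longrightarrow> (u, v) \<in> G \<Longrightarrow> (x - u, y - v) \<in> G"
  using is_operator_add[of G x y "-u" "-v"] is_operator_scaleR[of G u v "-1"] by simp

lemma is_operator_single_valued:
  assumes "is_operator G" "(x, y) \<in> G" "(x, y') \<in> G"
  shows "y = y'"
proof -
  have "(0, y - y') \<in> G"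
    using is_operator_diff[OF assms] by simp
  then have "y - y' = 0"
    using assms(1) unfolding is_operator_def by blast
  then show ?thesis
    by simp
qed

lemma csubspace_kernel: "is_operator G \<Longrightarrow> csubspace (kernel G)"
  using is_operator_add[of G _ 0 _ 0] is_operator_scaleC[of G _ 0]
  by (simp add: csubspace_def kernel_def is_operator_zero)

lemma csubspace_Domain:
  assumes "is_operator G"
  shows "csubspace (Domain G)"
proof -
  have "x + y \<in> Domain G" if "(x, a) \<in> G" "(y, b) \<in> G" for x y a b
    using is_operator_add[OF assms that] by blast
  moreover have "scaleC c x \<in> Domain G" if "(x, a) \<in> G" for x a c
    using is_operator_scaleC[OF assms that] by blast
  ultimately show ?thesis
    using is_operator_zero[OF assms] unfolding csubspace_def by blast
qed

lemma csubspace_Range: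
  assumes "is_operator G"
  shows "csubspace (Range G)"
proof -
  have "x + y \<in> Range G" if "(a, x) \<in> G" "(b, y) \<in> G" for x y a b
    using is_operator_add[OF assms that] by blast
  moreover have "scaleC c x \<in> Range G" if "(a, x) \<in> G" for x a c
    using is_operator_scaleC[OF assms that] by blast
  ultimately show ?thesis
    using is_operator_zero[OF assms] unfolding csubspace_def by blast
qed

lemma csubspace_graph:
  assumes "is_operator G"
  shows "csubspace G"
proof -
  have "p + q \<in> G" if "p \<in> G" "q \<in> G" for p q
    using is_operator_add[OF assms, of "fst p" "snd p" "fst q" "snd q"] that by (simp add: plus_prod_def)
  moreover have "scaleC c p \<in> G" if "p \<in> G" for p c
    using is_operator_scaleC[OF assms, of "fst p" "snd p" c] that by (simp add: scaleC_prod_def)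
  ultimately show ?thesis
    using is_operator_zero[OF assms] unfolding csubspace_def zero_prod_def by blast
qed

lemma closed_kernel:
  assumes "closed G"
  shows "closed (kernel G)"
proof -
  have "kernel G = (\<lambda>x. (x, 0)) -` G"
    by (auto simp: kernel_def)
  moreover have "closed ((\<lambda>x::'a. (x, 0::'a)) -` G)"
    using assms by (intro closed_vimage) (auto intro!: continuous_intros)
  ultimately show ?thesis
    by simp
qed

lemma op_comp_iff: "(x, z) \<in> op_comp A B \<longleftrightarrow> (\<exists>y. (x, y) \<in> B \<and> (y, z) \<in> A)"
  by (simp add: op_comp_def)

lemma Range_op_comp_subset: "Range (op_comp A B) \<subseteq> Range A"
  unfolding op_comp_def by blast

lemma op_comp_assoc: "op_comp A (op_comp B C) = op_comp (op_comp A B) C"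
  unfolding op_comp_def by blast

lemma is_operator_op_comp:
  assumes A: "is_operator A" and B: "is_operator B"
  shows "is_operator (op_comp A B)"
  unfolding is_operator_def
proof (intro conjI allI impI)
  show "(0, 0) \<in> op_comp A B"
    using is_operator_zero[OF A] is_operator_zero[OF B] by (auto simp: op_comp_iff)
next
  fix x z u w assume "(x, z) \<in> op_comp A B" "(u, w) \<in> op_comp A B"
  then obtain p q where "(x, p) \<in> B" "(p, z) \<in> A" "(u, q) \<in> B" "(q, w) \<in> A"
    by (auto simp: op_comp_iff)
  then have "(x + u, p + q) \<in> B" "(p + q, z + w) \<in> A"
    using is_operator_add[OF A] is_operator_add[OF B] by blast+
  then show "(x + u, z + w) \<in> op_comp A B"
    by (auto simp: op_comp_iff)
next
  fix c x z assume "(x, z) \<in> op_comp A B"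
  then obtain p where "(x, p) \<in> B" "(p, z) \<in> A"
    by (auto simp: op_comp_iff)
  then have "(scaleC c x, scaleC c p) \<in> B" "(scaleC c p, scaleC c z) \<in> A"
    using is_operator_scaleC[OF A] is_operator_scaleC[OF B] by blast+
  then show "(scaleC c x, scaleC c z) \<in> op_comp A B"
    by (auto simp: op_comp_iff)
next
  fix z assume "(0, z) \<in> op_comp A B"
  then obtain p where p: "(0, p) \<in> B" "(p, z) \<in> A"
    by (auto simp: op_comp_iff)
  then have "p = 0"
    using B unfolding is_operator_def by blast
  then show "z = 0"
    using p A unfolding is_operator_def by blast
qed

lemma op_adjoint_iff: "(y, z) \<in> op_adjoint G \<longleftrightarrow> (\<forall>x w. (x, w) \<in> G \<longrightarrow> cinner w y = cinner x z)"
  by (simp add: op_adjoint_def)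

lemma closed_op_adjoint: "closed (op_adjoint G)"
proof -
  have "op_adjoint G = (\<Inter>p\<in>G. {q. cinner (snd p) (fst q) = cinner (fst p) (snd q)})"
    by (auto simp: op_adjoint_def) (metis fst_conv snd_conv)
  moreover have "closed {q::'a \<times> 'a. cinner (snd p) (fst q) = cinner (fst p) (snd q)}" for p :: "'a \<times> 'a"
    by (rule closed_Collect_eq; rule continuous_on_cinner[OF continuous_on_const]; intro continuous_intros)
  ultimately show ?thesis
    by (metis (no_types, lifting) closed_INT)
qed

lemma is_operator_op_adjoint:
  assumes "densely_defined G"
  shows "is_operator (op_adjoint G)"
proof -
  have "z = 0" if "(0, z) \<in> op_adjoint G" for z
  proof -
    have "z \<in> orth (Domain G)"
      using that by (auto simp: orth_def op_adjoint_def)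
    then show "z = 0"
      using orth_dense assms by (auto simp: densely_defined_def)
  qed
  moreover have "(y + y', z + z') \<in> op_adjoint G"
    if "(y, z) \<in> op_adjoint G" "(y', z') \<in> op_adjoint G" for y z y' z'
    using that by (simp add: op_adjoint_iff cinner_add_right)
  moreover have "(scaleC c y, scaleC c z) \<in> op_adjoint G" if "(y, z) \<in> op_adjoint G" for c y z
    using that by (simp add: op_adjoint_iff cinner_scaleC_right)
  ultimately show ?thesis
    unfolding is_operator_def by (simp add: op_adjoint_iff)
qed

lemma Range_op_adjoint_subset: "Range (op_adjoint A) \<subseteq> orth (kernel A)"
proof
  fix y assume "y \<in> Range (op_adjoint A)"
  then obtain u where "(u, y) \<in> op_adjoint A"
    by blast
  then have "cinner n y = 0" if "(n, 0) \<in> A" for n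
    using that unfolding op_adjoint_iff by (metis cinner_zero_left)
  then show "y \<in> orth (kernel A)"
    by (simp add: orth_def kernel_def)
qed

lemma kernel_adjoint_comp: "kernel (op_comp (op_adjoint A) A) = kernel A"
proof
  show "kernel (op_comp (op_adjoint A) A) \<subseteq> kernel A"
  proof
    fix x assume "x \<in> kernel (op_comp (op_adjoint A) A)"
    then obtain v where v: "(x, v) \<in> A" "(v, 0) \<in> op_adjoint A"
      by (auto simp: kernel_def op_comp_iff)
    then have "cinner v v = 0"
      by (auto simp: op_adjoint_def)
    then show "x \<in> kernel A"
      using v by (simp add: kernel_def)
  qed
  have "(0, 0) \<in> op_adjoint A"
    by (simp add: op_adjoint_iff)
  then show "kernel A \<subseteq> kernel (op_comp (op_adjoint A) A)"
    by (auto simp: kernel_def op_comp_iff)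
qed

lemma subset_op_adjoint_adjoint: "G \<subseteq> op_adjoint (op_adjoint G)"
  by (auto simp: op_adjoint_def) (metis cinner_commute)

text \<open>The remainder \<open>(a, b)\<close> of \<open>(y, z) \<in> T\<^sup>*\<^sup>*\<close> after projecting onto the closed graph of
  \<open>T\<close> is orthogonal to that graph, i.e. \<open>(b, -a) \<in> T\<^sup>*\<close>; pairing this with
  \<open>(a, b) \<in> T\<^sup>*\<^sup>*\<close> gives \<open>-\<parallel>a\<parallel>\<^sup>2 = \<parallel>b\<parallel>\<^sup>2\<close>.\<close>

lemma op_adjoint_adjoint:
  assumes "closed_operator T"
  shows "op_adjoint (op_adjoint T) = T"
proof
  have op: "is_operator T" and cl: "closed T"
    using assms by (auto simp: closed_operator_def)
  show "op_adjoint (op_adjoint T) \<subseteq> T"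
  proof clarify
    fix y z assume yz: "(y, z) \<in> op_adjoint (op_adjoint T)"
    obtain p where p: "p \<in> T" "(y, z) - p \<in> orth T"
      using orth_decomposition[OF csubspace_graph[OF op] cl] .
    obtain x v where xv: "p = (x, v)"
      by (cases p)
    define a where "a = y - x"
    define b where "b = z - v"
    have "cinner x' a + cinner v' b = 0" if "(x', v') \<in> T" for x' v'
      using p(2) that by (auto simp: orth_def xv a_def b_def)
    then have ba: "(b, - a) \<in> op_adjoint T"
      by (auto simp: op_adjoint_def cinner_minus_right add_eq_0_iff)
    have "(x, v) \<in> op_adjoint (op_adjoint T)"
      using p(1) xv subset_op_adjoint_adjoint by blast
    then have "cinner (- a) x = cinner b v" "cinner (- a) y = cinner b z"
      using ba yz by (auto simp: op_adjoint_def)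
    then have "cinner (- a) a = cinner b b"
      by (simp add: a_def b_def cinner_diff_right)
    then have "Re (cinner (- a) a) = Re (cinner b b)"
      by simp
    then have "- Re (cinner a a) = Re (cinner b b)"
      by (simp add: cinner_minus_left)
    then have "(norm a)\<^sup>2 + (norm b)\<^sup>2 = 0"
      by (simp add: power2_norm_eq_cinner)
    then have "a = 0" "b = 0"
      by (simp_all add: sum_power2_eq_zero_iff)
    then show "(y, z) \<in> T"
      using p(1) xv by (simp add: a_def b_def)
  qed
qed (rule subset_op_adjoint_adjoint)

section \<open>Bounded preimages for operators with closed range\<close>

definition op_image_cball :: "('a::complex_hilbert_space) lop \<Rightarrow> real \<Rightarrow> 'a set" where
  "op_image_cball T c = {w. \<exists>x. (x, w) \<in> T \<and> norm x \<le> c}"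

lemma UN_closure_op_image_cball:
  fixes T :: "'a::complex_hilbert_space lop"
  assumes clR: "closed (Range T)"
  shows "(\<Union>n. closure (op_image_cball T (real n))) = Range T"
proof
  show "(\<Union>n. closure (op_image_cball T (real n))) \<subseteq> Range T"
    by (intro UN_least closure_minimal) (auto simp: clR op_image_cball_def)
  show "Range T \<subseteq> (\<Union>n. closure (op_image_cball T (real n)))"
  proof
    fix v assume "v \<in> Range T"
    then obtain x where "(x, v) \<in> T"
      by blast
    moreover obtain n where "norm x \<le> real n"
      using real_arch_simple by blast
    ultimately have "v \<in> op_image_cball T (real n)"
      by (auto simp: op_image_cball_def)
    then show "v \<in> (\<Union>n. closure (op_image_cball T (real n)))"
      using closure_subset by blast
  qed
qed

lemma Baire_op_image_cball:
  fixes T :: "'a::complex_hilbert_space lop"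
  assumes op: "is_operator T" and clR: "closed (Range T)"
  obtains n v0 r where "r > 0" "v0 \<in> Range T" "Range T \<inter> ball v0 r \<subseteq> closure (op_image_cball T (real n))"
proof -
  let ?X = "top_of_set (Range T)"
  define A where "A n = closure (op_image_cball T (real n))" for n :: nat
  have union: "(\<Union>n. A n) = Range T"
    unfolding A_def by (rule UN_closure_op_image_cball[OF clR])
  have complete: "completely_metrizable_space ?X"
    by (rule completely_metrizable_space_closedin[OF completely_metrizable_space_euclidean])
      (rule closed_closedin[THEN iffD1, OF clR])
  have closed_A: "closedin ?X (A n)" for n
  proof -
    have "A n \<subseteq> Range T"
      using union by blast
    then show ?thesis
      by (simp add: A_def closed_subset)
  qed
  have "\<exists>n. ?X interior_of A n \<noteq> {}"
  proof (rule ccontr)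
    assume "\<not> ?thesis"
    then have "?X interior_of (\<Union>(range A)) = {}"
      by (intro Baire_category_alt) (use complete closed_A in auto)
    moreover have "?X interior_of Range T = Range T"
      using interior_of_topspace[of ?X] by simp
    ultimately show False
      using union is_operator_zero[OF op] by auto
  qed
  then obtain n v0 where "v0 \<in> ?X interior_of A n"
    by blast
  then obtain U where U: "openin ?X U" "v0 \<in> U" "U \<subseteq> A n"
    by (auto simp: interior_of_def)
  then obtain r where "r > 0" "ball v0 r \<inter> Range T \<subseteq> U"
    by (auto simp: openin_contains_ball)
  moreover have "v0 \<in> Range T"
    using U by (auto simp: openin_contains_ball)
  ultimately show thesis
    using that[of r v0 n] U(3) by (auto simp: A_def)
qed

lemma small_vector_approximate_preimage:
  fixes T :: "'a::complex_hilbert_space lop"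
  assumes op: "is_operator T" and ball: "Range T \<inter> ball v0 r \<subseteq> closure (op_image_cball T c)"
    and v0: "v0 \<in> Range T" and u: "u \<in> Range T" "norm u < r" and \<delta>: "\<delta> > 0"
  shows "\<exists>x w. (x, w) \<in> T \<and> norm x \<le> 2 * c \<and> norm (u - w) < \<delta>"
proof -
  have "v0 + u \<in> Range T"
    using csubspace_add[OF csubspace_Range[OF op] v0 u(1)] .
  moreover have "r > 0"
    using u(2) norm_ge_zero[of u] by linarith
  ultimately have "v0 + u \<in> closure (op_image_cball T c)" "v0 \<in> closure (op_image_cball T c)"
    using ball v0 u(2) by (auto simp: dist_norm)
  then obtain w1 w2 where w1: "w1 \<in> op_image_cball T c" "dist w1 (v0 + u) < \<delta> / 2"
      and w2: "w2 \<in> op_image_cball T c" "dist w2 v0 < \<delta> / 2"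
    using \<delta> unfolding closure_approachable by (meson half_gt_zero)
  obtain x1 x2 where x: "(x1, w1) \<in> T" "norm x1 \<le> c" "(x2, w2) \<in> T" "norm x2 \<le> c"
    using w1(1) w2(1) by (auto simp: op_image_cball_def)
  have "(x1 - x2, w1 - w2) \<in> T"
    using is_operator_diff[OF op x(1,3)] .
  moreover have "norm (x1 - x2) \<le> 2 * c"
    using x(2,4) norm_triangle_ineq4[of x1 x2] by linarith
  moreover have "norm (u - (w1 - w2)) < \<delta>"
  proof -
    have "norm (v0 + u - w1) < \<delta> / 2" "norm (v0 - w2) < \<delta> / 2"
      using w1(2) w2(2) by (simp_all add: dist_norm norm_minus_commute)
    moreover have "norm (u - (w1 - w2)) = norm ((v0 + u - w1) - (v0 - w2))"
      by (simp add: algebra_simps)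
    ultimately show ?thesis
      using norm_triangle_ineq4[of "v0 + u - w1" "v0 - w2"] by linarith
  qed
  ultimately show ?thesis
    by blast
qed

lemma scaled_approximate_preimage:
  fixes T :: "'a::complex_hilbert_space lop"
  assumes op: "is_operator T" and r: "r > 0" and v0: "v0 \<in> Range T"
    and ball: "Range T \<inter> ball v0 r \<subseteq> closure (op_image_cball T c)"
    and v: "v \<in> Range T" and e: "e > 0"
  shows "\<exists>x w. (x, w) \<in> T \<and> norm x \<le> 4 * c / r * norm v \<and> norm (v - w) < e"
proof (cases "v = 0")
  case True
  then show ?thesis
    using is_operator_zero[OF op] e by (intro exI[of _ 0]) auto
next
  case False
  define s where "s = r / (2 * norm v)"
  have s: "s > 0"
    using r False by (simp add: s_def)
  have "scaleR s v \<in> Range T" "norm (scaleR s v) < r"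
    using csubspace_scaleR[OF csubspace_Range[OF op] v] s r False by (auto simp: s_def)
  then obtain x w where xw: "(x, w) \<in> T" "norm x \<le> 2 * c" "norm (scaleR s v - w) < s * e"
    using small_vector_approximate_preimage[OF op ball v0] s e by (meson mult_pos_pos)
  have "(scaleR (1/s) x, scaleR (1/s) w) \<in> T"
    using is_operator_scaleR[OF op xw(1)] .
  moreover have "norm (scaleR (1/s) x) \<le> 4 * c / r * norm v"
  proof -
    have "norm (scaleR (1/s) x) \<le> 2 * c / s"
      using xw(2) s by (simp add: divide_right_mono)
    also have "2 * c / s = 4 * c / r * norm v"
      using r False by (simp add: s_def field_simps)
    finally show ?thesis .
  qed
  moreover have "norm (v - scaleR (1/s) w) < e"
  proof -
    have "v - scaleR (1/s) w = scaleR (1/s) (scaleR s v - w)"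
      using s by (simp add: algebra_simps)
    then have "norm (v - scaleR (1/s) w) = norm (scaleR s v - w) / s"
      using s by simp
    then show ?thesis
      using xw(3) s by (simp add: pos_divide_less_eq mult.commute)
  qed
  ultimately show ?thesis
    by blast
qed

lemma approximate_bounded_preimage:
  fixes T :: "'a::complex_hilbert_space lop"
  assumes op: "is_operator T" and clR: "closed (Range T)"
  obtains K where "K \<ge> 0"
    "\<And>v e. v \<in> Range T \<Longrightarrow> e > 0 \<Longrightarrow> \<exists>x w. (x, w) \<in> T \<and> norm x \<le> K * norm v \<and> norm (v - w) < e"
proof -
  obtain n v0 r where r: "r > 0" and v0: "v0 \<in> Range T"
    and ball: "Range T \<inter> ball v0 r \<subseteq> closure (op_image_cball T (real n))"
    using Baire_op_image_cball[OF op clR] .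
  show thesis
  proof (rule that)
    show "4 * real n / r \<ge> 0"
      using r by simp
    show "\<exists>x w. (x, w) \<in> T \<and> norm x \<le> 4 * real n / r * norm v \<and> norm (v - w) < e"
      if "v \<in> Range T" "e > 0" for v e
      using scaled_approximate_preimage[OF op r v0 ball that] .
  qed
qed

lemma approximate_remainder_sequence:
  fixes T :: "'a::complex_hilbert_space lop"
  assumes op: "is_operator T"
    and approx: "\<And>v e. v \<in> Range T \<Longrightarrow> e > 0 \<Longrightarrow> \<exists>x w. (x, w) \<in> T \<and> norm x \<le> K * norm v \<and> norm (v - w) < e"
    and v: "v \<in> Range T" and e: "\<And>k. e k > 0"
  obtains R x w where "R 0 = v" "\<And>k. (x k, w k) \<in> T" "\<And>k. R (Suc k) = R k - w k"
    "\<And>k. norm (x k) \<le> K * norm (R k)" "\<And>k. norm (R (Suc k)) < e k"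
proof -
  obtain X W where XW: "\<And>r e. r \<in> Range T \<Longrightarrow> e > 0 \<Longrightarrow>
      (X r e, W r e) \<in> T \<and> norm (X r e) \<le> K * norm r \<and> norm (r - W r e) < e"
    using approx by metis
  define R where "R = rec_nat v (\<lambda>k r. r - W r (e k))"
  have R_0: "R 0 = v" and R_Suc: "R (Suc k) = R k - W (R k) (e k)" for k
    by (simp_all add: R_def)
  have R_Range: "R k \<in> Range T" for k
  proof (induction k)
    case (Suc k)
    then have "W (R k) (e k) \<in> Range T"
      using XW[OF _ e] by blast
    with Suc show ?case
      by (simp add: R_Suc csubspace_diff[OF csubspace_Range[OF op]])
  qed (simp add: R_0 v)
  define x where "x k = X (R k) (e k)" for k
  define w where "w k = W (R k) (e k)" for k
  show thesis
  proof (rule that[of R x w])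
    show "R 0 = v" "R (Suc k) = R k - w k" for k
      by (simp_all add: R_0 R_Suc w_def)
    show "(x k, w k) \<in> T" "norm (x k) \<le> K * norm (R k)" "norm (R (Suc k)) < e k" for k
      using XW[OF R_Range e] by (simp_all add: x_def w_def R_Suc)
  qed
qed

lemma approximate_preimage_series:
  fixes T :: "'a::complex_hilbert_space lop"
  assumes op: "is_operator T" and K: "K \<ge> 0"
    and approx: "\<And>v e. v \<in> Range T \<Longrightarrow> e > 0 \<Longrightarrow> \<exists>x w. (x, w) \<in> T \<and> norm x \<le> K * norm v \<and> norm (v - w) < e"
    and v: "v \<in> Range T"
  obtains x w where "\<And>k. (x k, w k) \<in> T" "\<And>k. norm (x k) \<le> K * norm v * (1/2)^k"
    "(\<lambda>n. \<Sum>k<n. w k) \<longlonglongrightarrow> v"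
proof (cases "v = 0")
  case True
  then show ?thesis
    using that[of "\<lambda>_. 0" "\<lambda>_. 0"] is_operator_zero[OF op] by simp
next
  case False
  define e where "e k = norm v / 2 ^ Suc k" for k :: nat
  have e: "e k > 0" for k
    using False by (simp add: e_def)
  show ?thesis
  proof (rule approximate_remainder_sequence[where e = e, OF op _ v e])
    show "\<And>v e. v \<in> Range T \<Longrightarrow> e > 0 \<Longrightarrow> \<exists>x w. (x, w) \<in> T \<and> norm x \<le> K * norm v \<and> norm (v - w) < e"
      by (rule approx)
  next
    fix R x w assume R_0: "R 0 = v" and xw: "\<And>k. (x k, w k) \<in> T"
      and R_Suc: "\<And>k. R (Suc k) = R k - w k" and x: "\<And>k. norm (x k) \<le> K * norm (R k)"
      and R_small: "\<And>k. norm (R (Suc k)) < e k"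
    have R_bound: "norm (R k) \<le> norm v * (1/2)^k" for k
    proof (cases k)
      case (Suc j)
      then show ?thesis
        using R_small[of j] by (simp add: e_def power_one_over divide_simps)
    qed (simp add: R_0)
    have "norm (x k) \<le> K * norm v * (1/2)^k" for k
      using x[of k] mult_left_mono[OF R_bound[of k] K] by simp
    moreover have "(\<lambda>n. \<Sum>k<n. w k) \<longlonglongrightarrow> v"
    proof -
      have "(\<Sum>k<n. w k) = v - R n" for n
        by (induction n) (simp_all add: R_0 R_Suc)
      moreover have "R \<longlonglongrightarrow> 0"
      proof (rule Lim_null_comparison)
        show "\<forall>\<^sub>F k in sequentially. norm (R k) \<le> norm v * (1/2)^k"
          using R_bound by simp
        show "(\<lambda>k. norm v * (1/2::real)^k) \<longlonglongrightarrow> 0"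
          by (intro tendsto_mult_right_zero LIMSEQ_power_zero) simp
      qed
      ultimately show ?thesis
        using tendsto_diff[OF tendsto_const, of R 0 sequentially v] by simp
    qed
    ultimately show ?thesis
      by (rule that[OF xw])
  qed
qed

lemma closed_graph_suminf:
  fixes T :: "'a::complex_hilbert_space lop"
  assumes op: "is_operator T" and cl: "closed T" and xw: "\<And>k. (x k, w k) \<in> T"
    and sx: "summable (\<lambda>k. norm (x k))" and sw: "(\<lambda>n. \<Sum>k<n. w k) \<longlonglongrightarrow> v"
  shows "(suminf x, v) \<in> T"
proof -
  have partial: "(\<Sum>k<n. x k, \<Sum>k<n. w k) \<in> T" for n
  proof (induction n)
    case (Suc n)
    then show ?case
      using is_operator_add[OF op Suc xw[of n]] by simp
  qed (simp add: is_operator_zero[OF op])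
  have "(\<lambda>n. \<Sum>k<n. x k) \<longlonglongrightarrow> suminf x"
    using summable_LIMSEQ[OF summable_norm_cancel[OF sx]] .
  then show ?thesis
    using closed_sequentially[OF cl partial tendsto_Pair[OF _ sw]] by blast
qed

theorem closed_range_bounded_preimage:
  fixes T :: "'a::complex_hilbert_space lop"
  assumes op: "is_operator T" and cl: "closed T" and clR: "closed (Range T)"
  obtains C where "\<And>v. v \<in> Range T \<Longrightarrow> \<exists>x. (x, v) \<in> T \<and> norm x \<le> C * norm v"
proof -
  obtain K where K: "K \<ge> 0" and approx:
    "\<And>v e. v \<in> Range T \<Longrightarrow> e > 0 \<Longrightarrow> \<exists>x w. (x, w) \<in> T \<and> norm x \<le> K * norm v \<and> norm (v - w) < e"
    using approximate_bounded_preimage[OF op clR] by blast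
  have "\<exists>x. (x, v) \<in> T \<and> norm x \<le> 2 * K * norm v" if v: "v \<in> Range T" for v
  proof -
    obtain x w where xw: "\<And>k. (x k, w k) \<in> T" and bound: "\<And>k. norm (x k) \<le> K * norm v * (1/2)^k"
      and sw: "(\<lambda>n. \<Sum>k<n. w k) \<longlonglongrightarrow> v"
      using approximate_preimage_series[OF op K approx v] by blast
    have geom: "summable (\<lambda>k. K * norm v * (1/2::real)^k)"
      by (intro summable_mult summable_geometric) simp
    have sx: "summable (\<lambda>k. norm (x k))"
      by (rule summable_comparison_test[OF _ geom]) (use bound in simp)
    have "norm (suminf x) \<le> (\<Sum>k. norm (x k))"
      by (rule summable_norm[OF sx])
    also have "\<dots> \<le> (\<Sum>k. K * norm v * (1/2::real)^k)"
      by (rule suminf_le[OF bound sx geom])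
    also have "\<dots> = 2 * K * norm v"
      using suminf_geometric[of "1/2::real"] suminf_mult[OF summable_geometric[of "1/2::real"], of "K * norm v"]
      by simp
    finally show ?thesis
      using closed_graph_suminf[OF op cl xw sx sw] by blast
  qed
  then show thesis
    using that by blast
qed

section \<open>The closed range theorem\<close>

lemma closed_zero_set_bounded_functional:
  fixes M :: "'a::complex_hilbert_space set" and f :: "'a \<Rightarrow> complex"
  assumes M: "csubspace M" "closed M"
    and diff: "\<And>v w. v \<in> M \<Longrightarrow> w \<in> M \<Longrightarrow> f (v - w) = f v - f w"
    and bound: "\<And>v. v \<in> M \<Longrightarrow> cmod (f v) \<le> B * norm v"
  shows "closed {v \<in> M. f v = 0}"
proof -
  have "dist (f v) (f w) \<le> \<bar>B\<bar> * dist v w" if "v \<in> M" "w \<in> M" for v w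
  proof -
    have "dist (f v) (f w) = cmod (f (v - w))"
      using diff[OF that] by (simp add: dist_norm)
    also have "\<dots> \<le> B * norm (v - w)"
      using bound[OF csubspace_diff[OF M(1) that]] .
    also have "\<dots> \<le> \<bar>B\<bar> * dist v w"
      by (simp add: dist_norm mult_right_mono)
    finally show ?thesis .
  qed
  then have "continuous_on M f"
    by (intro lipschitz_on_continuous_on[OF lipschitz_onI]) auto
  then have "closedin (top_of_set M) {v \<in> M. f v = 0}"
    by (rule continuous_closedin_preimage_constant)
  then show ?thesis
    using M(2) by (rule closedin_closed_trans)
qed

text \<open>The functional is conjugate-linear because \<open>cinner\<close> is conjugate-linear in its first
  argument.\<close>

lemma functional_eq_cinner_orth_vector:
  fixes M :: "'a::complex_hilbert_space set" and f :: "'a \<Rightarrow> complex"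
  assumes M: "csubspace M"
    and diff: "\<And>v w. v \<in> M \<Longrightarrow> w \<in> M \<Longrightarrow> f (v - w) = f v - f w"
    and scale: "\<And>c v. v \<in> M \<Longrightarrow> f (scaleC c v) = cnj c * f v"
    and w: "w \<in> M" "f w \<noteq> 0" "w \<in> orth {v \<in> M. f v = 0}" and v: "v \<in> M"
  shows "f v = cinner v (scaleC (f w / cinner w w) w)"
proof -
  define a where "a = cnj (f v / f w)"
  have "scaleC a w \<in> M"
    using csubspace_scaleC[OF M w(1)] .
  then have "v - scaleC a w \<in> {v \<in> M. f v = 0}"
    using w(2) diff[OF v] scale[OF w(1)] csubspace_diff[OF M v] by (simp add: a_def)
  then have "cinner (v - scaleC a w) w = 0"
    using w(3) by (auto simp: orth_def)
  then have "cinner v w = (f v / f w) * cinner w w"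
    by (simp add: cinner_diff_left cinner_scaleC_left a_def)
  moreover have "w \<noteq> 0"
    using w(2) scale[OF w(1), of 0] by auto
  ultimately show ?thesis
    using w(2) by (simp add: cinner_scaleC_right)
qed

lemma Riesz_representation_subspace:
  fixes M :: "'a::complex_hilbert_space set" and f :: "'a \<Rightarrow> complex"
  assumes M: "csubspace M" "closed M"
    and add: "\<And>v w. v \<in> M \<Longrightarrow> w \<in> M \<Longrightarrow> f (v + w) = f v + f w"
    and scale: "\<And>c v. v \<in> M \<Longrightarrow> f (scaleC c v) = cnj c * f v"
    and bound: "\<And>v. v \<in> M \<Longrightarrow> cmod (f v) \<le> B * norm v"
  shows "\<exists>u\<in>M. \<forall>v\<in>M. f v = cinner v u"
proof (cases "\<forall>v\<in>M. f v = 0")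
  case True
  then show ?thesis
    using csubspace_0[OF M(1)] by (intro bexI[of _ 0]) auto
next
  case False
  then obtain v0 where v0: "v0 \<in> M" "f v0 \<noteq> 0"
    by blast
  have diff: "f (v - w) = f v - f w" if "v \<in> M" "w \<in> M" for v w
    using add[OF csubspace_diff[OF M(1) that] that(2)] by simp
  have "f 0 = 0"
    using scale[of 0 0] csubspace_0[OF M(1)] by simp
  define N where "N = {v \<in> M. f v = 0}"
  have N: "csubspace N" "closed N"
    using M(1) add scale \<open>f 0 = 0\<close> closed_zero_set_bounded_functional[OF M diff bound]
    by (auto simp: N_def csubspace_def)
  obtain k where k: "k \<in> N" "v0 - k \<in> orth N"
    using orth_decomposition[OF N] .
  then have w: "v0 - k \<in> M" "f (v0 - k) \<noteq> 0" "v0 - k \<in> orth {v \<in> M. f v = 0}"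
    using v0 diff[of v0 k] csubspace_diff[OF M(1), of v0 k] by (auto simp: N_def)
  show ?thesis
    using functional_eq_cinner_orth_vector[OF M(1) diff scale w] csubspace_scaleC[OF M(1) w(1)] by blast
qed

lemma cinner_preimage_orth_kernel:
  fixes A :: "'a::complex_hilbert_space lop"
  assumes op: "is_operator A" and y: "y \<in> orth (kernel A)" and "(x, v) \<in> A" "(x', v) \<in> A"
  shows "cinner x y = cinner x' y"
proof -
  have "x - x' \<in> kernel A"
    using is_operator_diff[OF op assms(3,4)] by (simp add: kernel_def)
  then have "cinner (x - x') y = 0"
    using y by (simp add: orth_def)
  then show ?thesis
    by (simp add: cinner_diff_left)
qed

lemma exists_adjoint_preimage_in_Range:
  fixes A :: "'a::complex_hilbert_space lop"
  assumes op: "is_operator A" and cl: "closed A" and clR: "closed (Range A)"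
    and y: "y \<in> orth (kernel A)"
  obtains u where "u \<in> Range A" "(u, y) \<in> op_adjoint A"
proof -
  obtain C where C: "\<And>v. v \<in> Range A \<Longrightarrow> \<exists>x. (x, v) \<in> A \<and> norm x \<le> C * norm v"
    using closed_range_bounded_preimage[OF op cl clR] by blast
  define f where "f v = cinner (SOME x. (x, v) \<in> A) y" for v
  have f: "f v = cinner x y" if "(x, v) \<in> A" for x v
    using cinner_preimage_orth_kernel[OF op y someI[of "\<lambda>x. (x, v) \<in> A", OF that] that]
    by (simp add: f_def)
  have "\<exists>u\<in>Range A. \<forall>v\<in>Range A. f v = cinner v u"
  proof (rule Riesz_representation_subspace[OF csubspace_Range[OF op] clR])
    fix v w assume "v \<in> Range A" "w \<in> Range A"
    then obtain x1 x2 where x: "(x1, v) \<in> A" "(x2, w) \<in> A"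
      by blast
    then show "f (v + w) = f v + f w"
      using f[OF is_operator_add[OF op x]] f[OF x(1)] f[OF x(2)] by (simp add: cinner_add_left)
  next
    fix c v assume "v \<in> Range A"
    then obtain x where x: "(x, v) \<in> A"
      by blast
    then show "f (scaleC c v) = cnj c * f v"
      using f[OF is_operator_scaleC[OF op x]] f[OF x] by (simp add: cinner_scaleC_left)
  next
    fix v assume "v \<in> Range A"
    then obtain x where x: "(x, v) \<in> A" "norm x \<le> C * norm v"
      using C by blast
    have "cmod (f v) \<le> norm x * norm y"
      using f[OF x(1)] cmod_cinner_le by simp
    also have "\<dots> \<le> C * norm v * norm y"
      using x(2) by (simp add: mult_right_mono)
    finally show "cmod (f v) \<le> (C * norm y) * norm v"
      by (simp add: mult_ac)
  qed
  then obtain u where u: "u \<in> Range A" "\<And>v. v \<in> Range A \<Longrightarrow> f v = cinner v u"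
    by blast
  have "cinner w u = cinner x y" if "(x, w) \<in> A" for x w
    using u(2)[OF RangeI[OF that]] f[OF that] by simp
  then have "(u, y) \<in> op_adjoint A"
    by (simp add: op_adjoint_iff)
  with u(1) show thesis
    by (rule that)
qed

lemma Range_adjoint_comp:
  fixes A :: "'a::complex_hilbert_space lop"
  assumes "is_operator A" "closed A" "closed (Range A)"
  shows "Range (op_comp (op_adjoint A) A) = orth (kernel A)"
proof
  show "Range (op_comp (op_adjoint A) A) \<subseteq> orth (kernel A)"
    using Range_op_comp_subset[of "op_adjoint A" A] Range_op_adjoint_subset[of A] by (rule subset_trans)
  show "orth (kernel A) \<subseteq> Range (op_comp (op_adjoint A) A)"
  proof
    fix y assume "y \<in> orth (kernel A)"
    then obtain u where "u \<in> Range A" "(u, y) \<in> op_adjoint A"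
      using exists_adjoint_preimage_in_Range[OF assms] by blast
    then obtain x where "(x, y) \<in> op_comp (op_adjoint A) A"
      by (auto simp: op_comp_iff)
    then show "y \<in> Range (op_comp (op_adjoint A) A)"
      by blast
  qed
qed

lemma Range_op_adjoint:
  fixes A :: "'a::complex_hilbert_space lop"
  assumes "is_operator A" "closed A" "closed (Range A)"
  shows "Range (op_adjoint A) = orth (kernel A)"
proof (rule equalityI[OF Range_op_adjoint_subset])
  show "orth (kernel A) \<subseteq> Range (op_adjoint A)"
    using Range_adjoint_comp[OF assms] Range_op_comp_subset[of "op_adjoint A" A] by simp
qed

section \<open>Moore-Penrose inverses and orthogonal projections\<close>

lemma carrier_op_preimage:
  fixes B :: "'a::complex_hilbert_space lop"
  assumes op: "is_operator B" and clN: "closed (kernel B)" and xy: "(x, y) \<in> B"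
  obtains x' where "x' \<in> carrier_op B" "(x', y) \<in> B"
proof -
  obtain n where n: "n \<in> kernel B" "x - n \<in> orth (kernel B)"
    using orth_decomposition[OF csubspace_kernel[OF op] clN] .
  have "(x - n, y) \<in> B"
    using is_operator_diff[OF op xy, of n 0] n(1) by (simp add: kernel_def)
  then show thesis
    using that n(2) by (auto simp: carrier_op_def)
qed

lemma carrier_op_inj:
  fixes B :: "'a::complex_hilbert_space lop"
  assumes op: "is_operator B" and "x \<in> carrier_op B" "x' \<in> carrier_op B" "(x, y) \<in> B" "(x', y) \<in> B"
  shows "x = x'"
proof -
  have "x - x' \<in> kernel B"
    using is_operator_diff[OF op assms(4,5)] by (simp add: kernel_def)
  moreover have "x - x' \<in> orth (kernel B)"
    using assms(2,3) csubspace_diff[OF csubspace_orth] by (auto simp: carrier_op_def)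
  ultimately show ?thesis
    using mem_orth_self by fastforce
qed

lemma mp_inverse_on_Range:
  fixes B :: "'a::complex_hilbert_space lop"
  assumes op: "is_operator B" and y: "y \<in> Range B"
  shows "(y, x) \<in> mp_inverse B \<longleftrightarrow> x \<in> carrier_op B \<and> (x, y) \<in> B"
proof
  assume "(y, x) \<in> mp_inverse B"
  then obtain y1 z where yz: "y = y1 + z" "x \<in> carrier_op B" "(x, y1) \<in> B" "z \<in> orth (Range B)"
    by (auto simp: mp_inverse_def)
  then have "z \<in> Range B"
    using csubspace_diff[OF csubspace_Range[OF op] y, of y1] by auto
  then have "z = 0"
    using yz(4) by (rule mem_orth_self)
  then show "x \<in> carrier_op B \<and> (x, y) \<in> B"
    using yz by simp
next
  assume "x \<in> carrier_op B \<and> (x, y) \<in> B"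
  moreover have "(0::'a) \<in> orth (Range B)"
    by (rule csubspace_0[OF csubspace_orth])
  ultimately show "(y, x) \<in> mp_inverse B"
    unfolding mp_inverse_def by force
qed

definition orth_proj :: "('a::complex_hilbert_space) set \<Rightarrow> 'a lop" where
  "orth_proj M = {(x, q). q \<in> M \<and> x - q \<in> orth M}"

lemma orth_proj_orth:
  fixes N :: "'a::complex_hilbert_space set"
  assumes "csubspace N" "closed N"
  shows "(x, q) \<in> orth_proj (orth N) \<longleftrightarrow> q \<in> orth N \<and> x - q \<in> N"
  by (simp add: orth_proj_def orth_orth[OF assms])

lemma comp_mp_inverse:
  fixes B :: "'a::complex_hilbert_space lop"
  assumes op: "is_operator B" and clN: "closed (kernel B)"
  shows "op_comp B (mp_inverse B) = orth_proj (Range B)"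
proof
  show "op_comp B (mp_inverse B) \<subseteq> orth_proj (Range B)"
  proof clarify
    fix y v assume "(y, v) \<in> op_comp B (mp_inverse B)"
    then obtain x y1 z where "(x, v) \<in> B" "y = y1 + z" "(x, y1) \<in> B" "z \<in> orth (Range B)"
      by (auto simp: op_comp_iff mp_inverse_def)
    moreover from this have "v = y1"
      using is_operator_single_valued[OF op] by blast
    ultimately show "(y, v) \<in> orth_proj (Range B)"
      by (auto simp: orth_proj_def)
  qed
  show "orth_proj (Range B) \<subseteq> op_comp B (mp_inverse B)"
  proof clarify
    fix y q assume "(y, q) \<in> orth_proj (Range B)"
    then obtain x where x: "(x, q) \<in> B" and orth: "y - q \<in> orth (Range B)"
      by (auto simp: orth_proj_def)
    obtain x' where x': "x' \<in> carrier_op B" "(x', q) \<in> B"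
      using carrier_op_preimage[OF op clN x] .
    have "y = q + (y - q)"
      by simp
    then have "(y, x') \<in> mp_inverse B"
      using x' orth unfolding mp_inverse_def by blast
    then show "(y, q) \<in> op_comp B (mp_inverse B)"
      using x'(2) by (auto simp: op_comp_iff)
  qed
qed

lemma comp_orth_proj_orth_kernel:
  fixes T :: "'a::complex_hilbert_space lop"
  assumes op: "is_operator T" and clN: "closed (kernel T)"
  shows "op_comp T (orth_proj (orth (kernel T))) = T"
proof
  note P = orth_proj_orth[OF csubspace_kernel[OF op] clN]
  show "op_comp T (orth_proj (orth (kernel T))) \<subseteq> T"
  proof clarify
    fix x t assume "(x, t) \<in> op_comp T (orth_proj (orth (kernel T)))"
    then obtain q where "(x, q) \<in> orth_proj (orth (kernel T))" "(q, t) \<in> T"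
      by (auto simp: op_comp_iff)
    moreover from this have "(x - q, 0) \<in> T"
      using P by (simp add: kernel_def)
    ultimately show "(x, t) \<in> T"
      using is_operator_add[OF op] by fastforce
  qed
  show "T \<subseteq> op_comp T (orth_proj (orth (kernel T)))"
  proof clarify
    fix x t assume xt: "(x, t) \<in> T"
    obtain n where n: "n \<in> kernel T" "x - n \<in> orth (kernel T)"
      using orth_decomposition[OF csubspace_kernel[OF op] clN] .
    have "(x - n, t) \<in> T"
      using is_operator_diff[OF op xt, of n 0] n(1) by (simp add: kernel_def)
    then show "(x, t) \<in> op_comp T (orth_proj (orth (kernel T)))"
      using n by (auto simp: op_comp_iff P)
  qed
qed

lemma orth_proj_comp:
  fixes B :: "'a::complex_hilbert_space lop"
  assumes M: "csubspace M" and R: "Range B \<subseteq> M"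
  shows "op_comp (orth_proj M) B = B"
proof
  show "op_comp (orth_proj M) B \<subseteq> B"
  proof clarify
    fix x r assume "(x, r) \<in> op_comp (orth_proj M) B"
    then obtain y where xy: "(x, y) \<in> B" and r: "r \<in> M" "y - r \<in> orth M"
      by (auto simp: op_comp_iff orth_proj_def)
    have "y - r \<in> M"
      using csubspace_diff[OF M _ r(1)] xy R by blast
    then have "y = r"
      using mem_orth_self r(2) by fastforce
    then show "(x, r) \<in> B"
      using xy by simp
  qed
  show "B \<subseteq> op_comp (orth_proj M) B"
    using R csubspace_0[OF csubspace_orth] by (force simp: op_comp_iff orth_proj_def)
qed

lemma is_operator_orth_proj:
  fixes M :: "'a::complex_hilbert_space set"
  assumes M: "csubspace M"
  shows "is_operator (orth_proj M)"
  unfolding is_operator_def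
proof (intro conjI allI impI)
  show "(0, 0) \<in> orth_proj M"
    using csubspace_0[OF M] csubspace_0[OF csubspace_orth] by (simp add: orth_proj_def)
next
  fix x y u v assume "(x, y) \<in> orth_proj M" "(u, v) \<in> orth_proj M"
  then have "y + v \<in> M" "(x - y) + (u - v) \<in> orth M"
    by (auto simp: orth_proj_def intro: csubspace_add[OF M] csubspace_add[OF csubspace_orth])
  then show "(x + u, y + v) \<in> orth_proj M"
    by (simp add: orth_proj_def algebra_simps)
next
  fix c x y assume "(x, y) \<in> orth_proj M"
  then have "scaleC c y \<in> M" "scaleC c (x - y) \<in> orth M"
    by (auto simp: orth_proj_def intro: csubspace_scaleC[OF M] csubspace_scaleC[OF csubspace_orth])
  then show "(scaleC c x, scaleC c y) \<in> orth_proj M"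
    by (simp add: orth_proj_def scaleC_diff_right)
next
  fix y assume "(0, y) \<in> orth_proj M"
  then have "y \<in> M" "- y \<in> orth M"
    by (auto simp: orth_proj_def)
  moreover from this have "y \<in> orth M"
    using csubspace_uminus[OF csubspace_orth, of "- y"] by simp
  ultimately show "y = 0"
    by (blast intro: mem_orth_self)
qed

lemma closed_orth_proj: "closed M \<Longrightarrow> closed (orth_proj M)"
proof -
  assume "closed M"
  have "orth_proj M = snd -` M \<inter> (\<lambda>p. fst p - snd p) -` orth M"
    by (auto simp: orth_proj_def)
  moreover have "closed (snd -` M)" "closed ((\<lambda>p. fst p - snd p) -` orth M)"
    using \<open>closed M\<close> closed_orth by (auto intro!: closed_vimage continuous_intros)
  ultimately show ?thesis
    by auto
qed

lemma norm_orth_proj_diff_le: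
  fixes M :: "'a::complex_hilbert_space set"
  assumes M: "csubspace M" and "(x, q) \<in> orth_proj M" "(x', q') \<in> orth_proj M"
  shows "norm (q' - q) \<le> norm (x' - x)"
proof -
  have "q' - q \<in> M" "(x' - q') - (x - q) \<in> orth M"
    using assms csubspace_diff[OF M] csubspace_diff[OF csubspace_orth] by (auto simp: orth_proj_def)
  then have "cinner (q' - q) ((x' - q') - (x - q)) = 0"
    by (auto simp: orth_def)
  then have "(norm ((q' - q) + ((x' - q') - (x - q))))\<^sup>2 = (norm (q' - q))\<^sup>2 + (norm ((x' - q') - (x - q)))\<^sup>2"
    by (rule norm_add_Pythagorean_cinner)
  then have "(norm (q' - q))\<^sup>2 \<le> (norm (x' - x))\<^sup>2"
    by (simp add: algebra_simps)
  then show ?thesis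
    by (rule power2_le_imp_le) simp
qed

lemma closure_orth_proj_restrict:
  fixes M :: "'a::complex_hilbert_space set"
  assumes D: "closure D = UNIV" and M: "csubspace M" "closed M"
  shows "closure (orth_proj M \<inter> D \<times> UNIV) = orth_proj M"
proof
  show "closure (orth_proj M \<inter> D \<times> UNIV) \<subseteq> orth_proj M"
    using closure_minimal[OF _ closed_orth_proj[OF M(2)]] by blast
  show "orth_proj M \<subseteq> closure (orth_proj M \<inter> D \<times> UNIV)"
  proof clarify
    fix x q assume xq: "(x, q) \<in> orth_proj M"
    show "(x, q) \<in> closure (orth_proj M \<inter> D \<times> UNIV)"
      unfolding closure_approachable
    proof (intro allI impI)
      fix e :: real assume e: "e > 0"
      have "x \<in> closure D"
        using D by simp
      then obtain x' where x': "x' \<in> D" "dist x' x < e / 2"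
        using e unfolding closure_approachable by (meson half_gt_zero)
      obtain q' where "q' \<in> M" "x' - q' \<in> orth M"
        using orth_decomposition[OF M] .
      then have x'q': "(x', q') \<in> orth_proj M"
        by (simp add: orth_proj_def)
      have "dist (x', q') (x, q) \<le> norm (x' - x) + norm (q' - q)"
        using norm_Pair_le[of "x' - x" "q' - q"] by (simp add: dist_norm)
      also have "\<dots> \<le> 2 * norm (x' - x)"
        using norm_orth_proj_diff_le[OF M(1) xq x'q'] by simp
      also have "\<dots> < e"
        using x'(2) by (simp add: dist_norm)
      finally show "\<exists>y\<in>orth_proj M \<inter> D \<times> UNIV. dist y (x, q) < e"
        using x'q' x'(1) by blast
    qed
  qed
qed

lemma is_operator_restrict:
  assumes "is_operator G" "csubspace D"
  shows "is_operator (G \<inter> D \<times> UNIV)"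
  using assms unfolding is_operator_def csubspace_def by blast

section \<open>Closed operators with closed range\<close>

locale closed_range_operator =
  fixes T :: "'a::complex_hilbert_space lop"
  assumes closed_operator: "closed_operator T"
    and densely_defined: "densely_defined T"
    and closed_Range: "closed (Range T)"
begin

lemma is_operator: "is_operator T" and closed_graph: "closed T"
  using closed_operator by (simp_all add: closed_operator_def)

lemma is_operator_adjoint: "is_operator (op_adjoint T)"
  using densely_defined by (rule is_operator_op_adjoint)

lemma adjoint_adjoint: "op_adjoint (op_adjoint T) = T"
  using closed_operator by (rule op_adjoint_adjoint)

lemma Range_adjoint: "Range (op_adjoint T) = orth (kernel T)"
  using is_operator closed_graph closed_Range by (rule Range_op_adjoint)

lemma Range_eq_orth_kernel_adjoint: "Range T = orth (kernel (op_adjoint T))"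
  using Range_op_adjoint[OF is_operator_adjoint closed_op_adjoint]
  by (simp add: adjoint_adjoint Range_adjoint closed_orth)

lemma Range_comp_adjoint: "Range (op_comp T (op_adjoint T)) = Range T"
  using Range_adjoint_comp[OF is_operator_adjoint closed_op_adjoint]
  by (simp add: adjoint_adjoint Range_adjoint closed_orth Range_eq_orth_kernel_adjoint)

lemma adjoint_comp_cauchy_dual: "op_comp (op_adjoint T) (cauchy_dual T) = orth_proj (orth (kernel T))"
proof -
  let ?B = "op_comp (op_adjoint T) T"
  have "is_operator ?B"
    by (rule is_operator_op_comp[OF is_operator_adjoint is_operator])
  moreover have "closed (kernel ?B)"
    using closed_kernel[OF closed_graph] by (simp add: kernel_adjoint_comp)
  ultimately have "op_comp ?B (mp_inverse ?B) = orth_proj (Range ?B)"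
    by (rule comp_mp_inverse)
  then show ?thesis
    by (simp add: cauchy_dual_def op_comp_assoc Range_adjoint_comp[OF is_operator closed_graph closed_Range])
qed

lemma comp_adjoint_cauchy_dual: "op_comp T (op_comp (op_adjoint T) (cauchy_dual T)) = T"
  by (simp add: adjoint_comp_cauchy_dual comp_orth_proj_orth_kernel[OF is_operator closed_kernel[OF closed_graph]])

lemma cauchy_dual_adjoint:
  "cauchy_dual (op_adjoint T) = op_comp (op_adjoint T) (mp_inverse (op_comp T (op_adjoint T)))"
  by (simp add: cauchy_dual_def adjoint_adjoint)

lemma is_operator_comp_adjoint: "is_operator (op_comp T (op_adjoint T))"
  by (rule is_operator_op_comp[OF is_operator is_operator_adjoint])

lemma orth_proj_orth_kernel_iff:
  "(x, r) \<in> orth_proj (orth (kernel T)) \<longleftrightarrow> r \<in> orth (kernel T) \<and> x - r \<in> kernel T"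
  by (rule orth_proj_orth[OF csubspace_kernel[OF is_operator] closed_kernel[OF closed_graph]])

lemma cauchy_dual_adjoint_comp_subset:
  "op_comp (cauchy_dual (op_adjoint T)) T \<subseteq> orth_proj (orth (kernel T)) \<inter> Domain T \<times> UNIV"
proof clarify
  fix x r assume "(x, r) \<in> op_comp (cauchy_dual (op_adjoint T)) T"
  then obtain v p where xv: "(x, v) \<in> T" and vp: "(v, p) \<in> mp_inverse (op_comp T (op_adjoint T))"
    and pr: "(p, r) \<in> op_adjoint T"
    by (auto simp: cauchy_dual_adjoint op_comp_iff)
  have "v \<in> Range (op_comp T (op_adjoint T))"
    using xv Range_comp_adjoint by blast
  then have "(p, v) \<in> op_comp T (op_adjoint T)"
    using vp mp_inverse_on_Range[OF is_operator_comp_adjoint] by blast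
  then obtain r' where "(p, r') \<in> op_adjoint T" "(r', v) \<in> T"
    by (auto simp: op_comp_iff)
  then have rv: "(r, v) \<in> T"
    using is_operator_single_valued[OF is_operator_adjoint pr] by blast
  have "x - r \<in> kernel T"
    using is_operator_diff[OF is_operator xv rv] by (simp add: kernel_def)
  moreover have "r \<in> orth (kernel T)"
    using pr Range_adjoint by blast
  ultimately show "(x, r) \<in> orth_proj (orth (kernel T)) \<inter> Domain T \<times> UNIV"
    using xv orth_proj_orth_kernel_iff by blast
qed

lemma orth_proj_restrict_subset_cauchy_dual_adjoint_comp:
  "orth_proj (orth (kernel T)) \<inter> Domain T \<times> UNIV \<subseteq> op_comp (cauchy_dual (op_adjoint T)) T"
proof clarify
  fix x r v assume "(x, r) \<in> orth_proj (orth (kernel T))" and xv: "(x, v) \<in> T"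
  then have r: "r \<in> orth (kernel T)" "x - r \<in> kernel T"
    using orth_proj_orth_kernel_iff by blast+
  have rv: "(r, v) \<in> T"
    using is_operator_diff[OF is_operator xv, of "x - r" 0] r(2) by (simp add: kernel_def)
  have v: "v \<in> Range (op_comp T (op_adjoint T))"
    using rv Range_comp_adjoint by blast
  have "closed (kernel (op_comp T (op_adjoint T)))"
    using kernel_adjoint_comp[of "op_adjoint T"] closed_kernel[OF closed_op_adjoint]
    by (simp add: adjoint_adjoint)
  then obtain p where p: "p \<in> carrier_op (op_comp T (op_adjoint T))" "(p, v) \<in> op_comp T (op_adjoint T)"
    using v carrier_op_preimage[OF is_operator_comp_adjoint] by blast
  then obtain r' where pr': "(p, r') \<in> op_adjoint T" "(r', v) \<in> T"
    by (auto simp: op_comp_iff)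
  have "r' = r"
  proof (rule carrier_op_inj[OF is_operator _ _ pr'(2) rv])
    show "r' \<in> carrier_op T"
      using pr' Range_adjoint by (auto simp: carrier_op_def)
    show "r \<in> carrier_op T"
      using rv r(1) by (auto simp: carrier_op_def)
  qed
  moreover have "(v, p) \<in> mp_inverse (op_comp T (op_adjoint T))"
    using p mp_inverse_on_Range[OF is_operator_comp_adjoint v] by blast
  ultimately show "(x, r) \<in> op_comp (cauchy_dual (op_adjoint T)) T"
    using xv pr' by (auto simp: cauchy_dual_adjoint op_comp_iff)
qed

lemma cauchy_dual_adjoint_comp:
  "op_comp (cauchy_dual (op_adjoint T)) T = orth_proj (orth (kernel T)) \<inter> Domain T \<times> UNIV"
  using cauchy_dual_adjoint_comp_subset orth_proj_restrict_subset_cauchy_dual_adjoint_comp by blast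

lemma closable_cauchy_dual_adjoint_comp: "closable (op_comp (cauchy_dual (op_adjoint T)) T)"
  and closure_cauchy_dual_adjoint_comp:
    "op_closure (op_comp (cauchy_dual (op_adjoint T)) T) = orth_proj (orth (kernel T))"
proof -
  have "closure (orth_proj (orth (kernel T)) \<inter> Domain T \<times> UNIV) = orth_proj (orth (kernel T))"
    using closure_orth_proj_restrict[OF _ csubspace_orth closed_orth] densely_defined
    by (simp add: densely_defined_def)
  moreover have "is_operator (orth_proj (orth (kernel T)) \<inter> Domain T \<times> UNIV)"
    by (intro is_operator_restrict is_operator_orth_proj csubspace_orth csubspace_Domain is_operator)
  ultimately show "closable (op_comp (cauchy_dual (op_adjoint T)) T)"
    "op_closure (op_comp (cauchy_dual (op_adjoint T)) T) = orth_proj (orth (kernel T))"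
    using is_operator_orth_proj[OF csubspace_orth]
    by (simp_all add: closable_def op_closure_def cauchy_dual_adjoint_comp)
qed

end

theorem theorem2p2:
  fixes T :: "('a::complex_hilbert_space) lop"
  assumes "closed_operator T" and "densely_defined T" and "closed (Range T)"
  shows "(selfadjoint T \<longleftrightarrow>
            closable (op_comp (cauchy_dual (op_adjoint T)) T)
            \<and> T = op_comp (op_closure (op_comp (cauchy_dual (op_adjoint T)) T)) (op_adjoint T))
       \<and> (selfadjoint T \<longleftrightarrow>
            op_adjoint T = op_comp T (op_comp (op_adjoint T) (cauchy_dual T)))"
proof -
  interpret closed_range_operator T
    using assms by unfold_locales
  have "op_comp (orth_proj (orth (kernel T))) (op_adjoint T) = op_adjoint T"
    using orth_proj_comp[OF csubspace_orth Range_op_adjoint_subset] .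
  then show ?thesis
    using closable_cauchy_dual_adjoint_comp closure_cauchy_dual_adjoint_comp comp_adjoint_cauchy_dual
    unfolding selfadjoint_def by auto
qed

end
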